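(* Let $w:[0,1)\to[0,\infty)$ be a continuous probability density, and let $\{\tau_n\}$ be a $w$-pre-chaotic sequence of probability measures on the standard simplices $S_1^{(n)}$. For each $n$ define $w_n(\xi)=n\,\mathbb{E}_{\tau_n}[\tilde z_k]$ for $\frac{k-1}{n}<\xi\le\frac kn$, $1\le k\le n$ (and $w_n(0)=n\mathbb{E}_{\tau_n}[\tilde z_1]$). Then $$\lim_{n\to\infty}\int_0^1|w_n(\xi)-w(\xi)|\,d\xi=0.$$
   Context: $S_1^{(n)}=\{(\tilde z_1,\dots,\tilde z_n)\in[0,\infty)^n:\sum_j\tilde z_j=1\}$; $\mathbb{E}_{\tau_n}$, $\mathrm{Var}$, $\mathrm{Cov}$ refer to $\tilde z\sim\tau_n$. A sequence $\{\tau_n\}$ is called $w$-pre-chaotic if, writing $n\mathbb{E}_{\tau_n}[\tilde z_j]=w(j/n)+r_n(j)$, for each $0<\xi_*<1$ there is a constant $C<\infty$ depending only on $\xi_*$ such that for each $\epsilon>0$ there is $n_\epsilon$ with: for all $n>n_\epsilon$ and all $j,k<n\xi_*$, $|r_n(j)|<\epsilon$, $\mathrm{Var}[\tilde z_j]\le \frac{C}{n}\epsilon$ and $|\mathrm{Cov}(\tilde z_j,\tilde z_k)|\le\frac{C}{n^2}\epsilon$. *)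

theory Defs
  imports "HOL-Probability.Probability"
begin

definition std_simplex :: "nat \<Rightarrow> (nat \<Rightarrow> real) set" where
  "std_simplex n = {z. z \<in> extensional {1..n} \<and> (\<forall>j\<in>{1..n}. 0 \<le> z j) \<and> (\<Sum>j\<in>{1..n}. z j) = 1}"

definition coord_space :: "nat \<Rightarrow> (nat \<Rightarrow> real) measure" where
  "coord_space n = PiM {1..n} (\<lambda>_. lborel)"

definition prob_on_simplex :: "nat \<Rightarrow> (nat \<Rightarrow> real) measure \<Rightarrow> bool" where
  "prob_on_simplex n M \<longleftrightarrow> prob_space M \<and> sets M = sets (coord_space n)
      \<and> emeasure M (std_simplex n) = 1"

definition Ez :: "(nat \<Rightarrow> real) measure \<Rightarrow> nat \<Rightarrow> real" where
  "Ez M j = (\<integral>z. z j \<partial>M)"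

definition Covz :: "(nat \<Rightarrow> real) measure \<Rightarrow> nat \<Rightarrow> nat \<Rightarrow> real" where
  "Covz M j k = (\<integral>z. (z j - Ez M j) * (z k - Ez M k) \<partial>M)"

definition Varz :: "(nat \<Rightarrow> real) measure \<Rightarrow> nat \<Rightarrow> real" where
  "Varz M j = (\<integral>z. (z j - Ez M j)^2 \<partial>M)"

definition rem :: "(real \<Rightarrow> real) \<Rightarrow> (nat \<Rightarrow> (nat \<Rightarrow> real) measure) \<Rightarrow> nat \<Rightarrow> nat \<Rightarrow> real" where
  "rem w \<tau> n j = real n * Ez (\<tau> n) j - w (real j / real n)"

definition pre_chaotic :: "(real \<Rightarrow> real) \<Rightarrow> (nat \<Rightarrow> (nat \<Rightarrow> real) measure) \<Rightarrow> bool" where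
  "pre_chaotic w \<tau> \<longleftrightarrow>
    (\<forall>\<xi>s. 0 < \<xi>s \<and> \<xi>s < 1 \<longrightarrow>
      (\<exists>C::real. \<forall>\<epsilon>>0. \<exists>N::nat. \<forall>n>N. \<forall>j k.
         1 \<le> j \<and> 1 \<le> k \<and> real j < real n * \<xi>s \<and> real k < real n * \<xi>s \<longrightarrow>
           \<bar>rem w \<tau> n j\<bar> < \<epsilon>
           \<and> Varz (\<tau> n) j \<le> C / real n * \<epsilon>
           \<and> (j \<noteq> k \<longrightarrow> \<bar>Covz (\<tau> n) j k\<bar> \<le> C / (real n)^2 * \<epsilon>)))"

text \<open>w_n(xi) = n E[z_k] for (k-1)/n < xi <= k/n, and w_n(0) = n E[z_1].\<close>
definition wn :: "(nat \<Rightarrow> (nat \<Rightarrow> real) measure) \<Rightarrow> nat \<Rightarrow> real \<Rightarrow> real" where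
  "wn \<tau> n \<xi> = real n * Ez (\<tau> n) (if \<xi> \<le> 0 then 1 else nat \<lceil>real n * \<xi>\<rceil>)"

end

theory Submission
  imports Defs
begin

text \<open>
  On \<open>[0, b]\<close> with \<open>b < 1\<close> the step function \<open>w\<^sub>n\<close> converges to \<open>w\<close> uniformly:
  \<open>w\<^sub>n(\<xi>) = n E[z\<^sub>k]\<close> with \<open>k/n\<close> within \<open>1/n\<close> of \<open>\<xi>\<close>, so the remainder bound
  of pre-chaoticity and the uniform continuity of \<open>w\<close> on \<open>[0, (1 + b)/2]\<close> apply.
  Near \<open>1\<close> there is no such control, but \<open>w\<^sub>n\<close> and \<open>w\<close> are both probability densities
  on \<open>[0, 1]\<close> (the \<open>E[z\<^sub>k]\<close> sum to \<open>1\<close>).  Hence, as in Scheffe's lemma,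
  \<open>\<integral>|w\<^sub>n - w| = 2\<integral>(w - w\<^sub>n)\<^sup>+ \<le> 2 sup\<^bsub>[0,b]\<^esub>|w\<^sub>n - w| + 2\<integral>\<^bsub>(b,1]\<^esub> w\<close>,
  and the last term is small for \<open>b\<close> close to \<open>1\<close>.
\<close>

lemma set_integral_abs_diff_le:
  fixes f g :: "'a \<Rightarrow> real"
  assumes f: "set_integrable M S f" and g: "set_integrable M S g"
    and same_mass: "(LINT x:S|M. f x) = (LINT x:S|M. g x)"
    and A: "A \<in> sets M" "A \<subseteq> S"
    and f_nonneg: "AE x\<in>S in M. 0 \<le> f x" and g_nonneg: "AE x\<in>S in M. 0 \<le> g x"
  shows "(LINT x:S|M. \<bar>f x - g x\<bar>)
    \<le> 2 * (LINT x:A|M. \<bar>f x - g x\<bar>) + 2 * ((LINT x:S|M. g x) - (LINT x:A|M. g x))"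
proof -
  have indicator_restrict: "indicator S x *\<^sub>R (indicator A x * h x) = indicator A x *\<^sub>R h x"
    for h :: "'a \<Rightarrow> real" and x
    using A(2) by (auto simp: indicator_def)
  have restrict: "(LINT x:S|M. indicator A x * h x) = (LINT x:A|M. h x)" for h :: "'a \<Rightarrow> real"
    unfolding set_lebesgue_integral_def indicator_restrict ..
  have restrict_int: "set_integrable M S (\<lambda>x. indicator A x * h x)"
    if "set_integrable M S h" for h :: "'a \<Rightarrow> real"
    using set_integrable_subset[OF that A] unfolding set_integrable_def indicator_restrict .
  have diff_int: "set_integrable M S (\<lambda>x. \<bar>f x - g x\<bar>)"
    using f g by (intro set_integrable_abs set_integral_diff)
  define bound where "bound x = (f x - g x) + 2 * (indicator A x * \<bar>f x - g x\<bar>)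
    + 2 * (g x - indicator A x * g x)" for x
  have bound_int: "set_integrable M S bound"
    unfolding bound_def using f g diff_int restrict_int[OF diff_int] restrict_int[OF g]
    by (intro set_integral_add(1) set_integral_diff(1) set_integrable_mult_right) auto
  \<comment> \<open>Off \<open>A\<close> the positive part of \<open>g - f\<close> is at most \<open>g\<close>, on \<open>A\<close> at most \<open>|f - g|\<close>.\<close>
  have "AE x\<in>S in M. \<bar>f x - g x\<bar> \<le> bound x"
    using f_nonneg g_nonneg
  proof eventually_elim
    case (elim x)
    then show ?case
      by (cases "x \<in> A") (auto simp: bound_def abs_if)
  qed
  then have "(LINT x:S|M. \<bar>f x - g x\<bar>) \<le> (LINT x:S|M. bound x)"
    using diff_int bound_int by (rule set_integral_mono_AE[rotated 2])
  also have "\<dots> = 2 * (LINT x:A|M. \<bar>f x - g x\<bar>) + 2 * ((LINT x:S|M. g x) - (LINT x:A|M. g x))"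
    unfolding bound_def
    using f g diff_int restrict_int[OF diff_int] restrict_int[OF g] same_mass
    by (simp only: set_integral_add set_integral_diff set_integral_mult_right
        set_integrable_mult_right restrict)
  finally show ?thesis .
qed

lemma set_integral_insert_point:
  fixes f :: "'a::euclidean_space \<Rightarrow> real"
  assumes "set_integrable lborel A f" "a \<notin> A"
  shows "set_integrable lborel (insert a A) f"
    and "(LINT x:insert a A|lborel. f x) = (LINT x:A|lborel. f x)"
proof -
  have split: "indicator (insert a A) x *\<^sub>R f x = indicator A x *\<^sub>R f x + indicator {a} x * f a" for x
    using assms(2) by (auto simp: indicator_def)
  have point: "integrable lborel (\<lambda>x. indicator {a} x * f a)"
    by simp
  show "set_integrable lborel (insert a A) f"
    using assms(1) point unfolding set_integrable_def split by simp
  show "(LINT x:insert a A|lborel. f x) = (LINT x:A|lborel. f x)"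
    using assms(1) point unfolding set_integrable_def set_lebesgue_integral_def split
    by simp
qed

lemma set_integral_Icc_approx_Ico:
  fixes f :: "real \<Rightarrow> real"
  assumes "set_integrable lborel {a..<c} f" "a < c" "0 < r"
  obtains b where "a < b" "b < c" "(LINT x:{a..<c}|lborel. f x) - (LINT x:{a..b}|lborel. f x) < r"
proof -
  have "((\<lambda>b. LINT x:{a..b}|lborel. f x) \<longlongrightarrow> (LINT x:{a..<c}|lborel. f x)) (at_left c)"
    using tendsto_set_lebesgue_integral_at_left[of a c lborel f] assms by simp
  then have "\<forall>\<^sub>F b in at_left c. (LINT x:{a..<c}|lborel. f x) - r < (LINT x:{a..b}|lborel. f x)
      \<and> b \<in> {a<..<c}"
    using assms by (intro eventually_conj order_tendstoD(1) eventually_at_left_real) auto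
  then obtain b where "(LINT x:{a..<c}|lborel. f x) - r < (LINT x:{a..b}|lborel. f x)" "b \<in> {a<..<c}"
    by (auto dest: eventually_happens)
  then show ?thesis
    using that by auto
qed

lemma eventually_real_gt: "\<forall>\<^sub>F n in sequentially. c < real n"
  using eventually_compose_filterlim[OF eventually_gt_at_top filterlim_real_sequentially] .

lemma mem_cell_iff_ceiling:
  assumes "0 < n" "1 \<le> k"
  shows "x \<in> {(real k - 1) / real n<..real k / real n} \<longleftrightarrow> 0 < x \<and> nat \<lceil>real n * x\<rceil> = k"
proof -
  have "x \<in> {(real k - 1) / real n<..real k / real n} \<longleftrightarrow> \<lceil>real n * x\<rceil> = int k"
    using assms(1) by (simp add: ceiling_eq_iff field_simps)
  also have "\<dots> \<longleftrightarrow> 0 < x \<and> nat \<lceil>real n * x\<rceil> = k"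
  proof
    assume "\<lceil>real n * x\<rceil> = int k"
    then have "0 < real n * x"
      using assms(2) by linarith
    then show "0 < x \<and> nat \<lceil>real n * x\<rceil> = k"
      using \<open>\<lceil>real n * x\<rceil> = int k\<close> by (simp add: zero_less_mult_iff)
  next
    assume "0 < x \<and> nat \<lceil>real n * x\<rceil> = k"
    then show "\<lceil>real n * x\<rceil> = int k"
      using assms(2) by linarith
  qed
  finally show ?thesis .
qed

lemma ceiling_step_eq_sum_indicator:
  fixes c :: "nat \<Rightarrow> real"
  assumes "1 \<le> n"
  shows "indicator {0<..1} x * c (nat \<lceil>real n * x\<rceil>)
    = (\<Sum>k=1..n. c k * indicator {(real k - 1) / real n<..real k / real n} x)"
proof -
  have "(\<Sum>k=1..n. c k * indicator {(real k - 1) / real n<..real k / real n} x)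
      = (\<Sum>k=1..n. if 0 < x \<and> nat \<lceil>real n * x\<rceil> = k then c k else 0)"
  proof (intro sum.cong refl)
    fix k assume "k \<in> {1..n}"
    then show "c k * indicator {(real k - 1) / real n<..real k / real n} x
        = (if 0 < x \<and> nat \<lceil>real n * x\<rceil> = k then c k else 0)"
      using assms mem_cell_iff_ceiling[of n k x] by (simp add: indicator_def)
  qed
  also have "\<dots> = (if 0 < x \<and> nat \<lceil>real n * x\<rceil> \<in> {1..n} then c (nat \<lceil>real n * x\<rceil>) else 0)"
    by (cases "0 < x") simp_all
  also have "\<dots> = indicator {0<..1} x * c (nat \<lceil>real n * x\<rceil>)"
    using assms by (auto simp: indicator_def Suc_le_eq nat_le_iff ceiling_le_iff zero_less_mult_iff)
  finally show ?thesis ..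
qed

lemma AE_in_std_simplex:
  assumes "prob_on_simplex n M"
  shows "AE z in M. z \<in> std_simplex n"
proof -
  interpret prob_space M using assms by (simp add: prob_on_simplex_def)
  have "emeasure M (std_simplex n) = 1"
    using assms by (simp add: prob_on_simplex_def)
  moreover from this have "std_simplex n \<in> sets M"
    using emeasure_notin_sets by fastforce
  ultimately show ?thesis
    by (simp add: AE_in_set_eq_1 emeasure_eq_measure)
qed

lemma measurable_coordinate_on_simplex:
  assumes "prob_on_simplex n M" "j \<in> {1..n}"
  shows "(\<lambda>z. z j) \<in> borel_measurable M"
proof -
  have "(\<lambda>z. z j) \<in> borel_measurable (coord_space n)"
    using assms(2) by (simp add: coord_space_def measurable_component_singleton)
  moreover have "sets M = sets (coord_space n)"
    using assms(1) by (simp add: prob_on_simplex_def)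
  ultimately show ?thesis
    by (simp cong: measurable_cong_sets)
qed

lemma integrable_coordinate_on_simplex:
  assumes M: "prob_on_simplex n M" and j: "j \<in> {1..n}"
  shows "integrable M (\<lambda>z. z j)"
proof -
  interpret prob_space M using M by (simp add: prob_on_simplex_def)
  show ?thesis
  proof (rule Bochner_Integration.integrable_bound[where f="\<lambda>_. 1::real"])
    show "(\<lambda>z. z j) \<in> borel_measurable M"
      using measurable_coordinate_on_simplex[OF M j] .
    show "AE z in M. norm (z j) \<le> norm (1::real)"
      using AE_in_std_simplex[OF M]
    proof eventually_elim
      case (elim z)
      then have "\<forall>i\<in>{1..n}. 0 \<le> z i" "(\<Sum>i\<in>{1..n}. z i) = 1"
        by (auto simp: std_simplex_def)
      moreover have "z j \<le> (\<Sum>i\<in>{1..n}. z i)"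
        using j calculation by (intro member_le_sum) auto
      ultimately show ?case
        using j by simp
    qed
  qed simp
qed

lemma Ez_nonneg:
  assumes "prob_on_simplex n M" "j \<in> {1..n}"
  shows "0 \<le> Ez M j"
  unfolding Ez_def
  using AE_in_std_simplex[OF assms(1)] assms(2)
  by (intro integral_nonneg_AE) (auto simp: std_simplex_def elim: eventually_mono)

lemma sum_Ez_eq_1:
  assumes M: "prob_on_simplex n M"
  shows "(\<Sum>j\<in>{1..n}. Ez M j) = 1"
proof -
  interpret prob_space M using M by (simp add: prob_on_simplex_def)
  have "(\<Sum>j\<in>{1..n}. Ez M j) = (\<integral>z. (\<Sum>j\<in>{1..n}. z j) \<partial>M)"
    unfolding Ez_def using integrable_coordinate_on_simplex[OF M] by (simp add: integral_sum)
  also have "\<dots> = (\<integral>z. 1 \<partial>M)"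
    using AE_in_std_simplex[OF M] measurable_coordinate_on_simplex[OF M]
    by (intro integral_cong_AE) (auto simp: std_simplex_def elim: eventually_mono)
  also have "\<dots> = 1"
    by (simp add: prob_space)
  finally show ?thesis .
qed

lemma wn_cell:
  assumes "0 \<le> x" "1 \<le> n"
  obtains k where "wn \<tau> n x = real n * Ez (\<tau> n) k" "1 \<le> k"
    "x \<le> real k / real n" "real k / real n \<le> x + 1 / real n" "x \<le> 1 \<Longrightarrow> k \<le> n"
proof (cases "x = 0")
  case True
  then show ?thesis
    using assms that[of 1] by (simp add: wn_def)
next
  case False
  define k where "k = nat \<lceil>real n * x\<rceil>"
  have "0 < real n * x"
    using assms False by simp
  then have k: "real k = of_int \<lceil>real n * x\<rceil>" "1 \<le> k"
    unfolding k_def by (simp_all add: le_nat_iff)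
  have "real n * x \<le> real k" "real k \<le> real n * x + 1"
    unfolding k(1) by linarith+
  moreover have "k \<le> n" if "x \<le> 1"
    using that assms unfolding k_def by (simp add: nat_le_iff ceiling_le_iff)
  moreover have "wn \<tau> n x = real n * Ez (\<tau> n) k"
    using False assms(1) by (simp add: wn_def k_def)
  ultimately show ?thesis
    using assms that[of k] k(2) by (simp add: field_simps)
qed

lemma wn_nonneg:
  assumes "prob_on_simplex n (\<tau> n)" "1 \<le> n" "x \<in> {0..1}"
  shows "0 \<le> wn \<tau> n x"
proof -
  obtain k where "wn \<tau> n x = real n * Ez (\<tau> n) k" "1 \<le> k" "k \<le> n"
    using wn_cell[of x n \<tau>] assms(2,3) by auto
  then show ?thesis
    using Ez_nonneg[OF assms(1)] by simp
qed

lemma set_integral_wn: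
  assumes "1 \<le> n"
  shows "set_integrable lborel {0..1} (wn \<tau> n)"
    and "(LINT x:{0..1}|lborel. wn \<tau> n x) = (\<Sum>k=1..n. Ez (\<tau> n) k)"
proof -
  define c where "c k = real n * Ez (\<tau> n) k" for k
  define cell where "cell k = {(real k - 1) / real n<..real k / real n}" for k
  have cell_measure: "measure lborel (cell k) = 1 / real n" for k
    using assms by (simp add: cell_def field_simps)
  have split: "indicator {0..1} x *\<^sub>R wn \<tau> n x
      = indicator {0} x * c 1 + (\<Sum>k=1..n. c k * indicator (cell k) x)" for x
    using ceiling_step_eq_sum_indicator[OF assms, where c=c and x=x]
    by (auto simp: cell_def indicator_def wn_def c_def)
  have cell_int: "integrable lborel (\<lambda>x. c k * indicator (cell k) x)" for k
    by (intro integrable_mult_right integrable_real_indicator) (auto simp: cell_def divide_right_mono)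
  have point_int: "integrable lborel (\<lambda>x. indicator {0} x * c 1 :: real)"
    by simp
  show "set_integrable lborel {0..1} (wn \<tau> n)"
    unfolding set_integrable_def split
    by (intro Bochner_Integration.integrable_add Bochner_Integration.integrable_sum point_int cell_int)
  have "(LINT x:{0..1}|lborel. wn \<tau> n x)
      = (\<integral>x. indicator {0::real} x * c 1 \<partial>lborel)
        + (\<Sum>k=1..n. \<integral>x. c k * indicator (cell k) x \<partial>lborel)"
    unfolding set_lebesgue_integral_def split
    by (simp only: Bochner_Integration.integral_sum cell_int
        Bochner_Integration.integral_add[OF point_int Bochner_Integration.integrable_sum[OF cell_int]])
  also have "\<dots> = (\<Sum>k=1..n. c k * measure lborel (cell k))"
    using cell_int by simp
  also have "\<dots> = (\<Sum>k=1..n. Ez (\<tau> n) k)"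
    using assms by (simp add: cell_measure c_def)
  finally show "(LINT x:{0..1}|lborel. wn \<tau> n x) = (\<Sum>k=1..n. Ez (\<tau> n) k)" .
qed

lemma pre_chaotic_remainder:
  assumes "pre_chaotic w \<tau>" "0 < \<xi>" "\<xi> < 1" "0 < \<epsilon>"
  obtains N where "\<And>n j. N < n \<Longrightarrow> 1 \<le> j \<Longrightarrow> real j < real n * \<xi> \<Longrightarrow> \<bar>rem w \<tau> n j\<bar> < \<epsilon>"
  using assms unfolding pre_chaotic_def by (metis that)

lemma uniform_limit_wn:
  assumes w_cont: "continuous_on {0..<1} w" and pc: "pre_chaotic w \<tau>" and b: "0 \<le> b" "b < 1"
  shows "uniform_limit {0..b} (wn \<tau>) w sequentially"
  unfolding uniform_limit_iff dist_real_def
proof (intro allI impI)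
  fix e :: real
  assume e: "0 < e"
  define \<xi> where "\<xi> = (1 + b) / 2"
  have \<xi>: "b < \<xi>" "\<xi> < 1"
    using b by (auto simp: \<xi>_def)
  obtain N where N: "\<And>n j. N < n \<Longrightarrow> 1 \<le> j \<Longrightarrow> real j < real n * \<xi> \<Longrightarrow> \<bar>rem w \<tau> n j\<bar> < e / 2"
    using pre_chaotic_remainder[OF pc, of \<xi> "e / 2"] \<xi> b e by auto
  have "uniformly_continuous_on {0..\<xi>} w"
    using \<xi> by (intro compact_uniformly_continuous continuous_on_subset[OF w_cont]) auto
  then obtain d where d: "0 < d"
    and w_close: "\<And>x y. x \<in> {0..\<xi>} \<Longrightarrow> y \<in> {0..\<xi>} \<Longrightarrow> \<bar>y - x\<bar> < d \<Longrightarrow> \<bar>w y - w x\<bar> < e / 2"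
    using e unfolding uniformly_continuous_on_def dist_real_def by (metis half_gt_zero)
  have "\<forall>\<^sub>F n in sequentially. N < n \<and> 1 \<le> n \<and> 1 / d < real n \<and> 1 / (\<xi> - b) < real n"
    by (intro eventually_conj eventually_real_gt) auto
  then show "\<forall>\<^sub>F n in sequentially. \<forall>x\<in>{0..b}. \<bar>wn \<tau> n x - w x\<bar> < e"
  proof eventually_elim
    case (elim n)
    have n_pos: "0 < real n"
      using elim by simp
    have mesh: "1 / real n < d" "1 / real n < \<xi> - b"
      using elim d \<xi> n_pos by (simp_all add: field_simps)
    show ?case
    proof
      fix x assume x: "x \<in> {0..b}"
      obtain k where wn_k: "wn \<tau> n x = real n * Ez (\<tau> n) k" and k: "1 \<le> k"
        and grid: "x \<le> real k / real n" "real k / real n \<le> x + 1 / real n"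
        using wn_cell[of x n \<tau>] x elim by auto
      have "real k / real n < \<xi>"
        using grid mesh x by simp
      then have "\<bar>rem w \<tau> n k\<bar> < e / 2"
        using N elim k n_pos by (simp add: field_simps)
      moreover have "\<bar>w (real k / real n) - w x\<bar> < e / 2"
        using w_close grid mesh x \<open>real k / real n < \<xi>\<close> b by simp
      ultimately show "\<bar>wn \<tau> n x - w x\<bar> < e"
        unfolding wn_k rem_def by linarith
    qed
  qed
qed

lemma wn_L1_error_le:
  assumes tau_n: "prob_on_simplex n (\<tau> n)" and n: "1 \<le> n"
    and w_nonneg: "\<And>x. 0 \<le> x \<Longrightarrow> x < 1 \<Longrightarrow> 0 \<le> w x"
    and w_int: "set_integrable lborel {0..<1} w" and w_one: "(LINT x:{0..<1}|lborel. w x) = 1"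
    and b: "0 \<le> b" "b \<le> 1" and close: "\<And>x. x \<in> {0..b} \<Longrightarrow> \<bar>wn \<tau> n x - w x\<bar> \<le> e"
  shows "(LINT x:{0..1}|lborel. \<bar>wn \<tau> n x - w x\<bar>)
    \<le> 2 * e + 2 * (1 - (LINT x:{0..b}|lborel. w x))"
proof -
  have "{0..1::real} = insert 1 {0..<1}"
    by auto
  then have w_int': "set_integrable lborel {0..1} w" and w_mass: "(LINT x:{0..1}|lborel. w x) = 1"
    using set_integral_insert_point[OF w_int, of 1] w_one by auto
  have w_nonneg_AE: "AE x\<in>{0..1} in lborel. 0 \<le> w x"
    using AE_lborel_singleton[of 1] by eventually_elim (auto intro: w_nonneg)
  have wn_int: "set_integrable lborel {0..1} (wn \<tau> n)"
    using set_integral_wn(1)[OF n] .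
  have wn_mass: "(LINT x:{0..1}|lborel. wn \<tau> n x) = 1"
    using set_integral_wn(2)[OF n] sum_Ez_eq_1[OF tau_n] by simp
  have wn_nonneg_AE: "AE x\<in>{0..1} in lborel. 0 \<le> wn \<tau> n x"
    using wn_nonneg[where \<tau>=\<tau>, OF tau_n n] by (intro AE_I2) simp
  have "set_integrable lborel {0..b} (\<lambda>x. wn \<tau> n x - w x)"
    using set_integrable_subset[OF set_integral_diff(1)[OF wn_int w_int']] b by simp
  then have "set_integrable lborel {0..b} (\<lambda>x. \<bar>wn \<tau> n x - w x\<bar>)"
    by (rule set_integrable_abs)
  moreover have "set_integrable lborel {0..b} (\<lambda>_. e)"
    by (simp add: borel_integrable_atLeastAtMost')
  ultimately have "(LINT x:{0..b}|lborel. \<bar>wn \<tau> n x - w x\<bar>) \<le> (LINT x:{0..b}|lborel. e)"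
    using close by (rule set_integral_mono)
  also have "\<dots> = e * b"
    using b by (simp add: set_integral_const)
  also have "\<dots> \<le> e"
    using close[of 0] b by (simp add: mult_left_le order_trans[OF abs_ge_zero])
  finally have near: "(LINT x:{0..b}|lborel. \<bar>wn \<tau> n x - w x\<bar>) \<le> e" .
  have "(LINT x:{0..1}|lborel. \<bar>wn \<tau> n x - w x\<bar>)
      \<le> 2 * (LINT x:{0..b}|lborel. \<bar>wn \<tau> n x - w x\<bar>) + 2 * (1 - (LINT x:{0..b}|lborel. w x))"
    using set_integral_abs_diff_le[OF wn_int w_int' _ _ _ wn_nonneg_AE w_nonneg_AE, of "{0..b}"]
      wn_mass w_mass b by simp
  with near show ?thesis
    by linarith
qed

theorem lemma3p4:
  fixes w :: "real \<Rightarrow> real" and \<tau> :: "nat \<Rightarrow> (nat \<Rightarrow> real) measure"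
  assumes w_cont: "continuous_on {0..<1} w"
    and w_nonneg: "\<And>x. 0 \<le> x \<Longrightarrow> x < 1 \<Longrightarrow> 0 \<le> w x"
    and w_int: "set_integrable lborel {0..<1} w"
    and w_one: "set_lebesgue_integral lborel {0..<1} w = 1"
    and tau: "\<And>n. 1 \<le> n \<Longrightarrow> prob_on_simplex n (\<tau> n)"
    and pc: "pre_chaotic w \<tau>"
  shows "(\<lambda>n. set_lebesgue_integral lborel {0..1} (\<lambda>\<xi>. \<bar>wn \<tau> n \<xi> - w \<xi>\<bar>))
           \<longlonglongrightarrow> 0"
proof (rule order_tendstoI)
  fix r :: real
  assume "0 < r"
  then obtain b where b: "0 < b" "b < 1" and tail: "1 - (LINT x:{0..b}|lborel. w x) < r / 4"
    using set_integral_Icc_approx_Ico[OF w_int, of "r / 4"] w_one by auto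
  have "\<forall>\<^sub>F n in sequentially. \<forall>x\<in>{0..b}. dist (wn \<tau> n x) (w x) < r / 4"
    using \<open>0 < r\<close> b by (intro uniform_limitD[OF uniform_limit_wn[OF w_cont pc]]) simp_all
  with eventually_ge_at_top[of 1]
  show "\<forall>\<^sub>F n in sequentially. (LINT x:{0..1}|lborel. \<bar>wn \<tau> n x - w x\<bar>) < r"
  proof eventually_elim
    case (elim n)
    have close: "\<bar>wn \<tau> n x - w x\<bar> \<le> r / 4" if "x \<in> {0..b}" for x
      using elim that by (simp add: dist_real_def less_imp_le)
    have "(LINT x:{0..1}|lborel. \<bar>wn \<tau> n x - w x\<bar>)
        \<le> 2 * (r / 4) + 2 * (1 - (LINT x:{0..b}|lborel. w x))"
      using b close
      by (intro wn_L1_error_le[where \<tau>=\<tau>, OF tau[OF elim(1)] elim(1) w_nonneg w_int w_one]) auto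
    also have "\<dots> < r"
      using tail by (simp add: field_simps)
    finally show ?case .
  qed
next
  fix r :: real
  assume "r < 0"
  then show "\<forall>\<^sub>F n in sequentially. r < (LINT x:{0..1}|lborel. \<bar>wn \<tau> n x - w x\<bar>)"
    unfolding set_lebesgue_integral_def by (simp add: order.strict_trans2)
qed

end
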